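(* Let $n=2$, let $G_1,G_2$ satisfy the standing assumptions, and let $f$ be an anonymous BIC SCF, with associated constants $c_1^\pm(f),c_2^\pm(f)$. Then $$p_1c_2^+(f)-(1-p_1)c_2^-(f)\le p_1^2\qquad\text{and}\qquad p_2c_1^+(f)-(1-p_2)c_1^-(f)\le p_2^2.$$
   Context: There are $n\ge 2$ agents $N=\{1,\dots,n\}$ choosing between a Reform $R$ and the Status quo $S$. Agent $i$ gets utility $0$ if $S$ is chosen and utility $v_i\in\mathbb{R}$ if $R$ is chosen. Values are independent random variables $\tilde v_1,\dots,\tilde v_n$, $\tilde v_i\sim G_i$ (Borel probability distributions on $\mathbb{R}$, $G_i(0)=\Pr(\tilde v_i\le 0)$). Standing assumptions: all $\tilde v_i$ have the same support $V$ with $0\notin V$; $\mathbb{E}|\tilde v_i|<\infty$; $p_i:=1-G_i(0)\in(0,1)$. An SCF is a Borel measurable $f:V^n\to[0,1]$ (probability of choosing $R$). $f$ is anonymous if $f(v)=f(\pi v)$ for every $v\in V^n$ and every permutation $\pi$ of $N$, where $\pi v=(v_{\pi(1)},\dots,v_{\pi(n)})$. $f$ is BIC if for every $i$ and all $v_i,v_i'\in V$: $v_i\,\mathbb{E}(f(v_i,\tilde v_{-i}))\ge v_i\,\mathbb{E}(f(v_i',\tilde v_{-i}))$ (expectation over $\tilde v_{-i}=(\tilde v_j)_{j\neq i}$). For a BIC $f$, the map $v_i\mapsto \mathbb{E}(f(v_i,\tilde v_{-i}))$ is constant on $\{v_i\in V:v_i<0\}$ and on $\{v_i\in V: v_i>0\}$;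 $c_i^-(f)$ and $c_i^+(f)$ denote these two constant values, respectively. *)

theory Defs
  imports "HOL-Probability.Probability"
begin

definition support :: "real measure \<Rightarrow> real set" where
  "support M = {x. \<forall>e>0. 0 < measure M {x - e <..< x + e}}"

end

theory Submission
  imports Defs
begin

text \<open>Let \<open>P\<close> and \<open>N\<close> be the positive and negative parts of the common support \<open>V\<close>, and
  \<open>I(A, B)\<close> the integral over \<open>A \<times> B\<close>, with respect to \<open>G\<^sub>1 \<otimes> G\<^sub>1\<close>, of the rule \<open>f\<close>, which is
  symmetric by anonymity. Integrating the interim probability of agent 2 over \<open>P\<close> and over \<open>N\<close> gives
  \<open>p\<^sub>1 c\<^sub>2\<^sup>+ = I(P, P) + I(N, P)\<close> and \<open>(1 - p\<^sub>1) c\<^sub>2\<^sup>- = I(P, N) + I(N, N)\<close>. By symmetry the cross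
  terms agree, so \<open>p\<^sub>1 c\<^sub>2\<^sup>+ - (1 - p\<^sub>1) c\<^sub>2\<^sup>- = I(P, P) - I(N, N) \<le> p\<^sub>1\<^sup>2\<close>, and likewise for agent 1.\<close>

lemma notin_support_iff:
  "x \<notin> support M \<longleftrightarrow> (\<exists>e>0. measure M {x - e <..< x + e} = 0)"
  by (auto simp: support_def less_le)

lemma closed_support:
  assumes "finite_measure M" "sets M = sets borel"
  shows "closed (support M)"
  unfolding closed_def
proof (rule openI)
  interpret finite_measure M by fact
  fix x assume "x \<in> - support M"
  then obtain e where "e > 0" and null: "measure M {x - e <..< x + e} = 0"
    by (auto simp: notin_support_iff)
  have "y \<notin> support M" if "y \<in> ball x (e/2)" for y
  proof -
    have "{y - e/2 <..< y + e/2} \<subseteq> {x - e <..< x + e}"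
      using that by (auto simp: dist_real_def abs_real_def split: if_splits)
    then have "measure M {y - e/2 <..< y + e/2} \<le> 0"
      using null finite_measure_mono[of _ "{x - e <..< x + e}"] by (simp add: assms(2))
    then show ?thesis
      using \<open>e > 0\<close> by (auto simp: notin_support_iff measure_le_0_iff intro!: exI[of _ "e/2"])
  qed
  with \<open>e > 0\<close> show "\<exists>d>0. ball x d \<subseteq> - support M"
    by (intro exI[of _ "e/2"]) auto
qed

lemma AE_in_support:
  assumes "finite_measure M" "sets M = sets borel"
  shows "AE x in M. x \<in> support M"
proof -
  interpret finite_measure M by fact
  define I where "I = {(a, b) \<in> \<rat> \<times> \<rat>. measure M {a <..< b} = 0}"
  have "countable I"
    by (rule countable_subset[of _ "\<rat> \<times> \<rat>"]) (auto simp: I_def countable_rat)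
  then have null: "(\<Union>(a, b)\<in>I. {a <..< b}) \<in> null_sets M"
    by (rule null_sets_UN') (auto simp: I_def assms(2) null_sets_def emeasure_eq_measure)
  have "x \<in> (\<Union>(a, b)\<in>I. {a <..< b})" if x: "x \<notin> support M" for x
  proof -
    obtain e where "e > 0" and e_null: "measure M {x - e <..< x + e} = 0"
      using x by (auto simp: notin_support_iff)
    obtain a where a: "a \<in> \<rat>" "x - e < a" "a < x"
      using Rats_dense_in_real[of "x - e" x] \<open>e > 0\<close> by auto
    obtain b where b: "b \<in> \<rat>" "x < b" "b < x + e"
      using Rats_dense_in_real[of x "x + e"] \<open>e > 0\<close> by auto
    have "measure M {a <..< b} \<le> measure M {x - e <..< x + e}"
      using a b by (intro finite_measure_mono) (auto simp: assms(2))
    with e_null a b show ?thesis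
      by (auto simp: I_def measure_le_0_iff)
  qed
  with null show ?thesis
    by (intro AE_I') auto
qed

definition rect_integral :: "'a measure \<Rightarrow> ('a \<Rightarrow> 'a \<Rightarrow> real) \<Rightarrow> 'a set \<Rightarrow> 'a set \<Rightarrow> real"
  where "rect_integral M g A B = (\<integral>(x, y). indicator A x * indicator B y * g x y \<partial>(M \<Otimes>\<^sub>M M))"

context finite_measure
begin

lemma finite_measure_pair_self: "finite_measure (M \<Otimes>\<^sub>M M)"
  by (intro finite_measure_pair_measure) unfold_locales

context
  fixes g :: "'a \<Rightarrow> 'a \<Rightarrow> real"
  assumes g_measurable [measurable]: "(\<lambda>(x, y). g x y) \<in> borel_measurable (M \<Otimes>\<^sub>M M)"
    and g_nonneg: "\<And>x y. 0 \<le> g x y"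
    and g_le_1: "\<And>x y. g x y \<le> 1"
begin

lemma integrable_rect:
  assumes [measurable]: "A \<in> sets M" "B \<in> sets M"
  shows "integrable (M \<Otimes>\<^sub>M M) (\<lambda>(x, y). indicator A x * indicator B y * g x y)"
  by (rule finite_measure.integrable_const_bound[OF finite_measure_pair_self, where B = 1])
     (auto simp: indicator_def g_nonneg g_le_1)

lemma rect_integral_iterated:
  assumes [measurable]: "A \<in> sets M" "B \<in> sets M"
  shows "rect_integral M g A B = (\<integral>y. indicator B y * (\<integral>x. indicator A x * g x y \<partial>M) \<partial>M)"
proof -
  interpret pair_sigma_finite M M ..
  have "rect_integral M g A B = (\<integral>y. (\<integral>x. indicator B y * (indicator A x * g x y) \<partial>M) \<partial>M)"
    unfolding rect_integral_def integral_snd[OF integrable_rect[OF assms], symmetric]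
    by (simp add: mult_ac)
  then show ?thesis
    by simp
qed

lemma rect_integral_eq_const:
  assumes [measurable]: "A \<in> sets M" "B \<in> sets M"
    and const: "\<And>y. y \<in> B \<Longrightarrow> (\<integral>x. indicator A x * g x y \<partial>M) = c"
  shows "rect_integral M g A B = measure M B * c"
proof -
  have "rect_integral M g A B = (\<integral>y. indicator B y * c \<partial>M)"
    unfolding rect_integral_iterated[OF assms(1,2)]
    by (intro Bochner_Integration.integral_cong refl) (auto simp: const split: split_indicator)
  then show ?thesis
    by simp
qed

lemma rect_integral_nonneg: "0 \<le> rect_integral M g A B"
  unfolding rect_integral_def
  by (intro Bochner_Integration.integral_nonneg) (auto simp: g_nonneg)

lemma rect_integral_le:
  assumes [measurable]: "A \<in> sets M" "B \<in> sets M"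
  shows "rect_integral M g A B \<le> measure M A * measure M B"
proof -
  have "rect_integral M g A B \<le> (\<integral>z. indicator (A \<times> B) z \<partial>(M \<Otimes>\<^sub>M M))"
    unfolding rect_integral_def
  proof (rule Bochner_Integration.integral_mono)
    show "integrable (M \<Otimes>\<^sub>M M) (indicator (A \<times> B) :: _ \<Rightarrow> real)"
      using finite_measure.emeasure_finite[OF finite_measure_pair_self]
      by (intro integrable_real_indicator) (auto simp: top.not_eq_extremum)
  qed (auto simp: integrable_rect g_le_1 split: split_indicator split_indicator_asm)
  also have "\<dots> = measure M A * measure M B"
    by (simp add: measure_def emeasure_pair_measure_Times[OF assms] enn2real_mult)
  finally show ?thesis .
qed

lemma rect_integral_Un:
  assumes [measurable]: "A1 \<in> sets M" "A2 \<in> sets M" "B \<in> sets M"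
    and "A1 \<inter> A2 = {}"
  shows "rect_integral M g (A1 \<union> A2) B = rect_integral M g A1 B + rect_integral M g A2 B"
proof -
  have "(\<lambda>(x, y). indicator (A1 \<union> A2) x * indicator B y * g x y)
      = (\<lambda>z. (\<lambda>(x, y). indicator A1 x * indicator B y * g x y) z
            + (\<lambda>(x, y). indicator A2 x * indicator B y * g x y) z :: real)"
    by (auto simp: fun_eq_iff indicator_disj_union[OF \<open>A1 \<inter> A2 = {}\<close>] distrib_right)
  then show ?thesis
    unfolding rect_integral_def by (simp add: integrable_rect)
qed

lemma rect_integral_swap:
  assumes [measurable]: "A \<in> sets M" "B \<in> sets M"
    and sym: "\<And>x y. x \<in> A \<Longrightarrow> y \<in> B \<Longrightarrow> g x y = g y x"
  shows "rect_integral M g A B = rect_integral M g B A"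
proof -
  interpret pair_sigma_finite M M ..
  have "rect_integral M g A B = (\<integral>(x, y). indicator A y * indicator B x * g y x \<partial>(M \<Otimes>\<^sub>M M))"
    unfolding rect_integral_def
    using integral_product_swap[of "\<lambda>(x, y). indicator A x * indicator B y * g x y"] by simp
  also have "\<dots> = rect_integral M g B A"
    unfolding rect_integral_def
    by (intro Bochner_Integration.integral_cong) (auto simp: indicator_def sym)
  finally show ?thesis .
qed

end

end

lemma borel_measurable_extend_by_zero:
  fixes f :: "real \<Rightarrow> real \<Rightarrow> real"
  assumes "V \<in> sets borel"
    and "(\<lambda>(x, y). f x y) \<in> borel_measurable (restrict_space borel (V \<times> V))"
  shows "(\<lambda>(x, y). if x \<in> V \<and> y \<in> V then f x y else 0) \<in> borel_measurable (borel \<Otimes>\<^sub>M borel)"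
proof -
  have "V \<times> V \<in> sets borel"
    using assms(1) by (simp add: borel_prod[symmetric])
  then have "(\<lambda>z. indicator (V \<times> V) z *\<^sub>R (\<lambda>(x, y). f x y) z) \<in> borel_measurable borel"
    using assms(2) by (subst (asm) borel_measurable_restrict_space_iff) auto
  moreover have "(\<lambda>z. indicator (V \<times> V) z *\<^sub>R (\<lambda>(x, y). f x y) z)
      = (\<lambda>(x, y). if x \<in> V \<and> y \<in> V then f x y else 0)"
    by (auto simp: fun_eq_iff)
  ultimately show ?thesis
    by (simp add: borel_prod)
qed

lemma symmetric_interim_bound:
  fixes G :: "real measure" and V :: "real set" and g :: "real \<Rightarrow> real \<Rightarrow> real"
  assumes G: "prob_space G" "sets G = sets borel"
    and V: "support G = V" "0 \<notin> V"
    and g_measurable: "(\<lambda>(x, y). g x y) \<in> borel_measurable (borel \<Otimes>\<^sub>M borel)"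
    and g_nonneg: "\<And>x y. 0 \<le> g x y" and g_le_1: "\<And>x y. g x y \<le> 1"
    and sym: "\<And>x y. x \<in> V \<Longrightarrow> y \<in> V \<Longrightarrow> g x y = g y x"
    and cp: "\<And>v. v \<in> V \<Longrightarrow> 0 < v \<Longrightarrow> (\<integral>x\<in>V. g x v \<partial>G) = cp"
    and cm: "\<And>v. v \<in> V \<Longrightarrow> v < 0 \<Longrightarrow> (\<integral>x\<in>V. g x v \<partial>G) = cm"
  shows "(1 - measure G {..0}) * cp - (1 - (1 - measure G {..0})) * cm \<le> (1 - measure G {..0})^2"
proof -
  interpret prob_space G by (fact G)
  have space: "space G = UNIV"
    using sets_eq_imp_space_eq[OF G(2)] by simp
  have g_measurable_G: "(\<lambda>(x, y). g x y) \<in> borel_measurable (G \<Otimes>\<^sub>M G)"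
    using g_measurable by (simp add: measurable_cong_sets[OF sets_pair_measure_cong[OF G(2) G(2)] refl])
  note g_kernel = g_measurable_G g_nonneg g_le_1
  define P where "P = V \<inter> {0<..}"
  define N where "N = V \<inter> {..<0}"
  note sets_G [measurable_cong] = G(2)
  have [measurable]: "V \<in> sets borel"
    using closed_support[OF finite_measure_axioms G(2)] by (simp add: V)
  have [measurable]: "P \<in> sets G" "N \<in> sets G"
    unfolding P_def N_def by measurable
  have V_split: "V = P \<union> N" "P \<inter> N = {}"
    using V(2) by (auto simp: P_def N_def) (metis less_linear)
  have AE_V: "AE x in G. x \<in> V"
    using AE_in_support[OF finite_measure_axioms G(2)] by (simp add: V)
  have "measure G P = measure G (space G - {..0})"
    using AE_V by (intro measure_eq_AE) (auto simp: P_def space, measurable)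
  then have mP: "measure G P = 1 - measure G {..0}"
    by (simp add: prob_compl G(2))
  have mN: "measure G N = measure G {..0}"
    using AE_V V(2) by (intro measure_eq_AE) (auto simp: N_def less_le, measurable)
  have inner: "(\<integral>x. indicator V x * g x v \<partial>G) = (\<integral>x\<in>V. g x v \<partial>G)" for v
    by (simp add: set_lebesgue_integral_def)
  have "measure G P * cp = rect_integral G g V P"
    by (rule rect_integral_eq_const[OF g_kernel, symmetric]) (auto simp: inner cp P_def)
  also have "\<dots> = rect_integral G g P P + rect_integral G g N P"
    unfolding V_split(1) by (rule rect_integral_Un[OF g_kernel]) (simp_all add: V_split(2))
  finally have pos: "measure G P * cp = rect_integral G g P P + rect_integral G g N P" .
  have "measure G N * cm = rect_integral G g V N"
    by (rule rect_integral_eq_const[OF g_kernel, symmetric]) (auto simp: inner cm N_def)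
  also have "\<dots> = rect_integral G g P N + rect_integral G g N N"
    unfolding V_split(1) by (rule rect_integral_Un[OF g_kernel]) (simp_all add: V_split(2))
  finally have neg: "measure G N * cm = rect_integral G g P N + rect_integral G g N N" .
  have "rect_integral G g N P = rect_integral G g P N"
    by (rule rect_integral_swap[OF g_kernel]) (auto simp: sym P_def N_def)
  moreover have "rect_integral G g P P \<le> measure G P * measure G P"
    by (rule rect_integral_le[OF g_kernel]) simp_all
  moreover have "0 \<le> rect_integral G g N N"
    by (rule rect_integral_nonneg[OF g_kernel])
  ultimately show ?thesis
    using pos neg mP mN by (simp add: power2_eq_square)
qed

theorem lemma2:
  fixes G1 G2 :: "real measure" and V :: "real set"
    and f :: "real \<Rightarrow> real \<Rightarrow> real"
    and c1p c1m c2p c2m :: real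
  assumes G1: "prob_space G1" "sets G1 = sets borel"
      and G2: "prob_space G2" "sets G2 = sets borel"
      and supp1: "support G1 = V" and supp2: "support G2 = V"
      and zero_notin: "0 \<notin> V"
      and int1: "integrable G1 (\<lambda>x. x)" and int2: "integrable G2 (\<lambda>x. x)"
      and p1: "0 < 1 - measure G1 {..0}" "1 - measure G1 {..0} < 1"
      and p2: "0 < 1 - measure G2 {..0}" "1 - measure G2 {..0} < 1"
      and meas: "(\<lambda>(x, y). f x y) \<in> borel_measurable (restrict_space borel (V \<times> V))"
      and range: "\<And>x y. x \<in> V \<Longrightarrow> y \<in> V \<Longrightarrow> 0 \<le> f x y \<and> f x y \<le> 1"
      and anon: "\<And>x y. x \<in> V \<Longrightarrow> y \<in> V \<Longrightarrow> f x y = f y x"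
      and BIC1: "\<And>v v'. v \<in> V \<Longrightarrow> v' \<in> V \<Longrightarrow>
          v * (\<integral>y\<in>V. f v' y \<partial>G2) \<le> v * (\<integral>y\<in>V. f v y \<partial>G2)"
      and BIC2: "\<And>v v'. v \<in> V \<Longrightarrow> v' \<in> V \<Longrightarrow>
          v * (\<integral>x\<in>V. f x v' \<partial>G1) \<le> v * (\<integral>x\<in>V. f x v \<partial>G1)"
      and c1p: "\<And>v. v \<in> V \<Longrightarrow> 0 < v \<Longrightarrow> (\<integral>y\<in>V. f v y \<partial>G2) = c1p"
      and c1m: "\<And>v. v \<in> V \<Longrightarrow> v < 0 \<Longrightarrow> (\<integral>y\<in>V. f v y \<partial>G2) = c1m"
      and c2p: "\<And>v. v \<in> V \<Longrightarrow> 0 < v \<Longrightarrow> (\<integral>x\<in>V. f x v \<partial>G1) = c2p"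
      and c2m: "\<And>v. v \<in> V \<Longrightarrow> v < 0 \<Longrightarrow> (\<integral>x\<in>V. f x v \<partial>G1) = c2m"
  shows "(1 - measure G1 {..0}) * c2p - (1 - (1 - measure G1 {..0})) * c2m
            \<le> (1 - measure G1 {..0})^2
       \<and> (1 - measure G2 {..0}) * c1p - (1 - (1 - measure G2 {..0})) * c1m
            \<le> (1 - measure G2 {..0})^2"
proof -
  define g where "g x y = (if x \<in> V \<and> y \<in> V then f x y else 0)" for x y
  have "closed V"
    using closed_support[OF prob_space.finite_measure[OF G1(1)] G1(2)] by (simp add: supp1)
  then have g_measurable: "(\<lambda>(x, y). g x y) \<in> borel_measurable (borel \<Otimes>\<^sub>M borel)"
    unfolding g_def by (intro borel_measurable_extend_by_zero borel_closed meas)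
  have g_bounds: "0 \<le> g x y" "g x y \<le> 1" for x y
    using range by (auto simp: g_def)
  have g_sym: "g x y = g y x" for x y
    using anon by (auto simp: g_def)
  have g_int_1: "(\<integral>x\<in>V. g x v \<partial>G1) = (\<integral>x\<in>V. f x v \<partial>G1)" if "v \<in> V" for v
    unfolding set_lebesgue_integral_def
    by (intro Bochner_Integration.integral_cong) (auto simp: g_def that split: split_indicator)
  have g_int_2: "(\<integral>x\<in>V. g x v \<partial>G2) = (\<integral>y\<in>V. f v y \<partial>G2)" if "v \<in> V" for v
    unfolding set_lebesgue_integral_def
    by (intro Bochner_Integration.integral_cong) (auto simp: g_def that anon split: split_indicator)
  show ?thesis
    using symmetric_interim_bound[OF G1 supp1 zero_notin g_measurable g_bounds g_sym, of c2p c2m]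
      symmetric_interim_bound[OF G2 supp2 zero_notin g_measurable g_bounds g_sym, of c1p c1m]
    by (simp add: g_int_1 g_int_2 c1p c1m c2p c2m)
qed

end
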